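(* Let $f:\mathbb{R}^n\to\mathbb{R}$, $g:\mathbb{R}^m\to\mathbb{R}$, $Q:\mathbb{R}^n\times\mathbb{R}^m\to\mathbb{R}\cup\{+\infty\}$ and $L(x,y)=f(x)+Q(x,y)+g(y)$ satisfy the following: (i) $L$ is bounded below; (ii) $f,g$ are continuously differentiable and $\nabla f$, $\nabla g$ are Lipschitz continuous with constants $L_{\nabla f}$, $L_{\nabla g}$ respectively; (iii) $Q$ is proper and lower semicontinuous; (iv) $\phi_1:\mathbb{R}^n\to\mathbb{R}$ and $\phi_2:\mathbb{R}^m\to\mathbb{R}$ are differentiable, $\phi_i$ is $\theta_i$-strongly convex with $\theta_1>L_{\nabla f}$, $\theta_2>L_{\nabla g}$, and $\nabla\phi_i$ is $\eta_i$-Lipschitz continuous ($i=1,2$). Let $\{(x_k,y_k)\}$ and $\{(\hat x_k,\hat y_k)\}$ be sequences generated by the following algorithm: choose $(x_0,y_0)\in\mathbb{R}^n\times\mathbb{R}^m$, set $(\hat x_0,\hat y_0)=(x_0,y_0)$, choose $\alpha_{\max},\beta_{\max}\ge 0$ with $\alpha_{\max}+\beta_{\max}<1$ and parameters $\alpha_k\in[0,\alpha_{\max}]$, $\beta_k\in[0,\beta_{\max}]$; for $k=0,1,2,\dots$: 1. $x_{k+1}\in\arg\min_{x\in\mathbb{R}^n}\{Q(x,\hat y_k)+\langle\nabla f(\hat x_k),x\rangle+D_{\phi_1}(x,\hat x_k)\}$, and $y_{k+1}\in\arg\min_{y\in\mathbb{R}^m}\{Q(x_{k+1},y)+\langle\nabla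 g(\hat y_k),y\rangle+D_{\phi_2}(y,\hat y_k)\}$; 2. $u_{k+1}=x_{k+1}+\alpha_k(x_{k+1}-x_k)+\beta_k(x_k-x_{k-1})$, $v_{k+1}=y_{k+1}+\alpha_k(y_{k+1}-y_k)+\beta_k(y_k-y_{k-1})$; 3. if $L(u_{k+1},v_{k+1})\le L(x_{k+1},y_{k+1})$ then $(\hat x_{k+1},\hat y_{k+1})=(u_{k+1},v_{k+1})$, else $(\hat x_{k+1},\hat y_{k+1})=(x_{k+1},y_{k+1})$. Then: (i) The sequences $\{L(x_k,y_k)\}$ and $\{L(\hat x_k,\hat y_k)\}$ are monotonically nonincreasing and have the same limit, i.e. $\lim_{k\to\infty}L(x_k,y_k)=\lim_{k\to\infty}L(\hat x_k,\hat y_k)=L^\ast$. In particular, for all $k$, $L(x_{k+1},y_{k+1})\le L(x_k,y_k)-\rho\|(x_{k+1}-\hat x_k,y_{k+1}-\hat y_k)\|^2$ and $L(\hat x_{k+1},\hat y_{k+1})\le L(\hat x_k,\hat y_k)-\rho\|(x_{k+1}-\hat x_k,y_{k+1}-\hat y_k)\|^2$, where $\rho=\min\{\frac{\theta_1-L_{\nabla f}}{2},\frac{\theta_2-L_{\nabla g}}{2}\}$. (ii) $\sum_{k=0}^\infty\|(x_{k+1}-\hat x_k,y_{k+1}-\hat y_k)\|^2<\infty$, and hence $\lim_{k\to\infty}\|x_{k+1}-\hat x_k\|=0$ and $\lim_{k\to\infty}\|y_{k+1}-\hat y_k\|=0$.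
   Context: For a convex differentiable function $\phi$, the Bregman distance is $D_\phi(x,y)=\phi(x)-\phi(y)-\langle\nabla\phi(y),x-y\rangle$. A function $\phi$ is $\theta$-strongly convex ($\theta>0$) if $\phi-\frac{\theta}{2}\|\cdot\|^2$ is convex. Norms are Euclidean. In step 2 at $k=0$, $(x_{-1},y_{-1})$ denotes a given initial point (the paper does not specify it; e.g. $(x_{-1},y_{-1})=(x_0,y_0)$). "Generated by the algorithm" presupposes that the minimizers in step 1 exist and some choice is made. *)

theory Defs
  imports "HOL-Analysis.Analysis"
begin

definition bregman :: "('a::real_inner \<Rightarrow> real) \<Rightarrow> ('a \<Rightarrow> 'a) \<Rightarrow> 'a \<Rightarrow> 'a \<Rightarrow> real" where
  "bregman phi gphi x y = phi x - phi y - inner (gphi y) (x - y)"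

definition strongly_convex :: "real \<Rightarrow> ('a::real_normed_vector \<Rightarrow> real) \<Rightarrow> bool" where
  "strongly_convex theta phi \<longleftrightarrow> theta > 0 \<and> convex_on UNIV (\<lambda>x. phi x - theta / 2 * (norm x)\<^sup>2)"

definition lsc :: "('a::topological_space \<Rightarrow> ereal) \<Rightarrow> bool" where
  "lsc F \<longleftrightarrow> (\<forall>p. F p \<le> Liminf (at p) F)"

definition proper_fun :: "('a \<Rightarrow> ereal) \<Rightarrow> bool" where
  "proper_fun F \<longleftrightarrow> (\<forall>p. F p \<noteq> -\<infinity>) \<and> (\<exists>p. F p \<noteq> \<infinity>)"

end

theory Submission
  imports Defs
begin

text \<open>
  Each block update is a Bregman proximal-gradient step. By the descent lemma, \<open>f\<close> lies below its
  linearisation at \<open>xh k\<close> plus \<open>Lf/2 \<parallel>x - xh k\<parallel>\<^sup>2\<close>, while strong convexity of \<open>phi1\<close> bounds the Bregman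
  distance from below by \<open>theta1/2 \<parallel>x - xh k\<parallel>\<^sup>2\<close>; comparing the minimiser \<open>x (Suc k)\<close> with the
  competitor \<open>xh k\<close> therefore decreases \<open>f + Q\<close> by \<open>(theta1 - Lf)/2 \<parallel>x (Suc k) - xh k\<parallel>\<^sup>2\<close>, and
  likewise for the \<open>y\<close>-block. The extrapolated point is accepted only if it does not increase \<open>L\<close>,
  so \<open>L (xh k) (yh k) \<le> L (x k) (y k)\<close> and the two sequences of values interlace. Telescoping
  against the lower bound of \<open>L\<close> makes the squared step lengths summable.
\<close>

lemma has_real_derivative_along_line:
  fixes F :: "'a::real_inner \<Rightarrow> real"
  assumes "\<And>z. (F has_derivative (\<lambda>h. inner (G z) h)) (at z)"
  shows "((\<lambda>t. F (a + t *\<^sub>R d)) has_real_derivative inner (G (a + t *\<^sub>R d)) d) (at t)"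
proof -
  have "((\<lambda>t. a + t *\<^sub>R d) has_derivative (\<lambda>h. h *\<^sub>R d)) (at t)"
    by (auto intro!: derivative_eq_intros)
  from has_derivative_compose[OF this assms]
  have "((\<lambda>t. F (a + t *\<^sub>R d)) has_derivative (\<lambda>h. inner (G (a + t *\<^sub>R d)) (h *\<^sub>R d))) (at t)"
    by (simp add: o_def)
  moreover have "(\<lambda>h. inner (G (a + t *\<^sub>R d)) (h *\<^sub>R d)) = (*) (inner (G (a + t *\<^sub>R d)) d)"
    by (auto simp: mult.commute)
  ultimately show ?thesis
    by (simp add: has_field_derivative_def)
qed

lemma lipschitz_gradient_quadratic_upper_bound:
  fixes f :: "'a::real_inner \<Rightarrow> real"
  assumes f_deriv: "\<And>z. (f has_derivative (\<lambda>h. inner (gf z) h)) (at z)"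
    and gf_lip: "Lf-lipschitz_on UNIV gf"
  shows "f b \<le> f a + inner (gf a) (b - a) + Lf / 2 * (norm (b - a))\<^sup>2"
proof -
  define d where "d = b - a"
  define h where "h t = f (a + t *\<^sub>R d) - t * inner (gf a) d - Lf / 2 * t\<^sup>2 * (norm d)\<^sup>2" for t
  have "h 1 \<le> h 0"
  proof (rule DERIV_nonpos_imp_nonincreasing[of 0 1 h])
    fix t :: real
    assume t: "0 \<le> t" "t \<le> 1"
    have h_deriv: "(h has_real_derivative
        inner (gf (a + t *\<^sub>R d)) d - inner (gf a) d - Lf * t * (norm d)\<^sup>2) (at t)"
      unfolding h_def
      by (rule derivative_eq_intros has_real_derivative_along_line[OF f_deriv] refl | simp)+
    have "inner (gf (a + t *\<^sub>R d)) d - inner (gf a) d = inner (gf (a + t *\<^sub>R d) - gf a) d"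
      by (simp add: inner_diff_left)
    also have "\<dots> \<le> norm (gf (a + t *\<^sub>R d) - gf a) * norm d"
      by (rule norm_cauchy_schwarz)
    also have "\<dots> \<le> Lf * norm (t *\<^sub>R d) * norm d"
      using lipschitz_on_normD[OF gf_lip, of "a + t *\<^sub>R d" a] by (simp add: mult_right_mono)
    also have "\<dots> = Lf * t * (norm d)\<^sup>2"
      using t by (simp add: power2_eq_square)
    finally show "\<exists>y. DERIV h t :> y \<and> y \<le> 0"
      using h_deriv by auto
  qed simp
  then show ?thesis
    by (simp add: h_def d_def)
qed

lemma has_derivative_power2_norm:
  "((\<lambda>z::'a::real_inner. (norm z)\<^sup>2) has_derivative (\<lambda>h. inner (2 *\<^sub>R z) h)) (at z)"
proof -
  have "((\<lambda>z::'a. inner z z) has_derivative (\<lambda>h. inner z h + inner h z)) (at z)"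
    by (auto intro!: derivative_eq_intros)
  moreover have "(\<lambda>h. inner z h + inner h z) = (\<lambda>h. inner (2 *\<^sub>R z) h)"
    by (auto simp: inner_commute)
  ultimately show ?thesis
    by (simp add: power2_norm_eq_inner)
qed

text \<open>
  The convex function \<open>phi - theta/2 \<parallel>\<cdot>\<parallel>\<^sup>2\<close> restricted to the segment from \<open>y\<close> to \<open>x\<close> lies above
  its tangent at \<open>y\<close>.
\<close>

lemma strongly_convex_bregman_lower_bound:
  fixes phi :: "'a::real_inner \<Rightarrow> real"
  assumes phi_sc: "strongly_convex theta phi"
    and phi_deriv: "\<And>z. (phi has_derivative (\<lambda>h. inner (gphi z) h)) (at z)"
  shows "theta / 2 * (norm (x - y))\<^sup>2 \<le> bregman phi gphi x y"
proof -
  define d where "d = x - y"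
  define psi where "psi z = phi z - theta / 2 * (norm z)\<^sup>2" for z
  define p where "p t = psi (y + t *\<^sub>R d)" for t
  have psi_convex: "convex_on UNIV psi"
    using phi_sc unfolding strongly_convex_def psi_def[abs_def] by simp
  have p_convex: "convex_on UNIV p"
  proof (rule convex_onI)
    fix s a b :: real
    assume s: "0 < s" "s < 1"
    have "y + ((1 - s) *\<^sub>R a + s *\<^sub>R b) *\<^sub>R d = (1 - s) *\<^sub>R (y + a *\<^sub>R d) + s *\<^sub>R (y + b *\<^sub>R d)"
      by (simp add: algebra_simps)
    then show "p ((1 - s) *\<^sub>R a + s *\<^sub>R b) \<le> (1 - s) * p a + s * p b"
      unfolding p_def using convex_onD[OF psi_convex, of s "y + a *\<^sub>R d" "y + b *\<^sub>R d"] s by simp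
  qed simp
  have "((\<lambda>t. phi (y + t *\<^sub>R d) - theta / 2 * (norm (y + t *\<^sub>R d))\<^sup>2) has_real_derivative
      inner (gphi (y + 0 *\<^sub>R d)) d - theta / 2 * inner (2 *\<^sub>R (y + 0 *\<^sub>R d)) d) (at 0)"
    by (intro DERIV_diff DERIV_cmult has_real_derivative_along_line[OF phi_deriv]
        has_real_derivative_along_line[OF has_derivative_power2_norm])
  then have p_deriv: "(p has_real_derivative inner (gphi y) d - theta * inner y d) (at 0)"
    unfolding p_def[abs_def] psi_def by simp
  have "p 1 - p 0 \<ge> (inner (gphi y) d - theta * inner y d) * (1 - 0)"
    by (rule convex_on_imp_above_tangent[OF p_convex])
      (use p_deriv in \<open>auto intro: has_field_derivative_at_within\<close>)
  moreover have "(norm x)\<^sup>2 = (norm y)\<^sup>2 + 2 * inner y d + (norm d)\<^sup>2"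
    unfolding d_def power2_norm_eq_inner by (simp add: algebra_simps inner_commute)
  ultimately show ?thesis
    by (simp add: p_def psi_def bregman_def d_def algebra_simps)
qed

text \<open>
  The extended-real term \<open>q\<close> stands for the nonsmooth part of the objective (\<open>Q\<close> with the other
  block frozen); the step hypothesis compares the minimiser \<open>x1\<close> with the competitor \<open>x0\<close>.
\<close>

lemma bregman_proximal_gradient_step_decrease:
  fixes f phi :: "'a::real_inner \<Rightarrow> real" and q0 q1 :: ereal
  assumes f_deriv: "\<And>z. (f has_derivative (\<lambda>h. inner (gf z) h)) (at z)"
    and gf_lip: "Lf-lipschitz_on UNIV gf"
    and phi_deriv: "\<And>z. (phi has_derivative (\<lambda>h. inner (gphi z) h)) (at z)"
    and phi_sc: "strongly_convex theta phi"
    and step: "q1 + ereal (inner (gf x0) x1 + bregman phi gphi x1 x0)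
                 \<le> q0 + ereal (inner (gf x0) x0 + bregman phi gphi x0 x0)"
  shows "ereal (f x1) + q1 + ereal ((theta - Lf) / 2 * (norm (x1 - x0))\<^sup>2) \<le> ereal (f x0) + q0"
proof -
  have "f x1 + (theta - Lf) / 2 * (norm (x1 - x0))\<^sup>2 + (inner (gf x0) x0 + bregman phi gphi x0 x0)
      \<le> f x0 + (inner (gf x0) x1 + bregman phi gphi x1 x0)"
    using lipschitz_gradient_quadratic_upper_bound[OF f_deriv gf_lip, of x1 x0]
      strongly_convex_bregman_lower_bound[OF phi_sc phi_deriv, of x1 x0]
    by (simp add: bregman_def inner_diff_right left_diff_distrib diff_divide_distrib)
  with step show ?thesis
    by (cases q0; cases q1) auto
qed

lemma alternating_bregman_step_decrease:
  fixes f phi1 :: "'a::real_inner \<Rightarrow> real" and g phi2 :: "'b::real_inner \<Rightarrow> real"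
    and Q :: "'a \<Rightarrow> 'b \<Rightarrow> ereal"
  assumes f_deriv: "\<And>a. (f has_derivative (\<lambda>h. inner (gf a) h)) (at a)"
    and g_deriv: "\<And>b. (g has_derivative (\<lambda>h. inner (gg b) h)) (at b)"
    and gf_lip: "Lf-lipschitz_on UNIV gf" and gg_lip: "Lg-lipschitz_on UNIV gg"
    and phi1_deriv: "\<And>a. (phi1 has_derivative (\<lambda>h. inner (gphi1 a) h)) (at a)"
    and phi2_deriv: "\<And>b. (phi2 has_derivative (\<lambda>h. inner (gphi2 b) h)) (at b)"
    and phi1_sc: "strongly_convex theta1 phi1" and phi2_sc: "strongly_convex theta2 phi2"
    and x_step: "Q x1 y0 + ereal (inner (gf x0) x1 + bregman phi1 gphi1 x1 x0)
                   \<le> Q x0 y0 + ereal (inner (gf x0) x0 + bregman phi1 gphi1 x0 x0)"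
    and y_step: "Q x1 y1 + ereal (inner (gg y0) y1 + bregman phi2 gphi2 y1 y0)
                   \<le> Q x1 y0 + ereal (inner (gg y0) y0 + bregman phi2 gphi2 y0 y0)"
  shows "ereal (f x1) + Q x1 y1 + ereal (g y1) \<le> ereal (f x0) + Q x0 y0 + ereal (g y0)
           - ereal (min ((theta1 - Lf) / 2) ((theta2 - Lg) / 2) * (norm (x1 - x0, y1 - y0))\<^sup>2)"
proof -
  define m where "m = min ((theta1 - Lf) / 2) ((theta2 - Lg) / 2)"
  define a where "a = (theta1 - Lf) / 2 * (norm (x1 - x0))\<^sup>2"
  define b where "b = (theta2 - Lg) / 2 * (norm (y1 - y0))\<^sup>2"
  define r where "r = m * (norm (x1 - x0, y1 - y0))\<^sup>2"
  have x_decrease: "ereal (f x1) + Q x1 y0 + ereal a \<le> ereal (f x0) + Q x0 y0"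
    unfolding a_def
    by (rule bregman_proximal_gradient_step_decrease[OF f_deriv gf_lip phi1_deriv phi1_sc x_step])
  have y_decrease: "ereal (g y1) + Q x1 y1 + ereal b \<le> ereal (g y0) + Q x1 y0"
    unfolding b_def
    by (rule bregman_proximal_gradient_step_decrease[OF g_deriv gg_lip phi2_deriv phi2_sc y_step])
  have "m * (norm (x1 - x0))\<^sup>2 \<le> a"
    unfolding m_def a_def by (intro mult_right_mono) (auto simp: min_def)
  moreover have "m * (norm (y1 - y0))\<^sup>2 \<le> b"
    unfolding m_def b_def by (intro mult_right_mono) (auto simp: min_def)
  ultimately have "r \<le> a + b"
    unfolding r_def norm_Pair by (simp add: distrib_left)
  then have "ereal (f x1) + Q x1 y1 + ereal (g y1) + ereal r
      \<le> ereal (f x1) + Q x1 y1 + ereal (g y1) + (ereal a + ereal b)"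
    by (intro add_left_mono) simp
  also have "\<dots> = ereal (f x1) + ereal a + (ereal (g y1) + Q x1 y1 + ereal b)"
    by (simp only: ac_simps)
  also have "\<dots> \<le> ereal (f x1) + ereal a + (ereal (g y0) + Q x1 y0)"
    using y_decrease by (rule add_left_mono)
  also have "\<dots> = ereal (f x1) + Q x1 y0 + ereal a + ereal (g y0)"
    by (simp only: ac_simps)
  also have "\<dots> \<le> ereal (f x0) + Q x0 y0 + ereal (g y0)"
    using x_decrease by (rule add_right_mono)
  finally show ?thesis
    by (simp add: ereal_le_minus r_def m_def)
qed

lemma antimono_if_ereal_decrease:
  fixes s :: "nat \<Rightarrow> ereal"
  assumes "\<And>k. s (Suc k) \<le> s k - ereal (e k)" and "\<And>k. 0 \<le> e k"
  shows "antimono s"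
proof (rule decseq_SucI)
  fix k
  show "s (Suc k) \<le> s k"
    using assms(1)[of k] ereal_diff_le_self[of "ereal (e k)" "s k"] assms(2)[of k] by simp
qed

lemma ereal_sufficient_decrease_summable_convergent:
  fixes s :: "nat \<Rightarrow> ereal"
  assumes bdd: "\<And>k. ereal c \<le> s k" and start: "s 0 < \<infinity>"
    and decrease: "\<And>k. s (Suc k) \<le> s k - ereal (e k)" and e_nonneg: "\<And>k. 0 \<le> e k"
  shows "summable e \<and> (\<exists>l::real. s \<longlonglongrightarrow> ereal l)"
proof -
  have "antimono s"
    using decrease e_nonneg by (rule antimono_if_ereal_decrease)
  then have s_finite: "\<bar>s k\<bar> \<noteq> \<infinity>" for k
    using start bdd[of k] antimonoD[of s 0 k] by auto
  define r where "r k = real_of_ereal (s k)" for k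
  have s_r: "s k = ereal (r k)" for k
    using s_finite[of k] by (simp add: r_def ereal_real)
  have e_le: "e k \<le> r k - r (Suc k)" for k
    using decrease[of k] by (simp add: s_r)
  have r_bdd: "c \<le> r k" for k
    using bdd[of k] by (simp add: s_r)
  have "summable e"
  proof (rule summableI_nonneg_bounded[where x = "r 0 - c"])
    fix n
    have "(\<Sum>k<n. e k) \<le> (\<Sum>k<n. r k - r (Suc k))"
      by (intro sum_mono e_le)
    also have "\<dots> = r 0 - r n"
      by (rule sum_lessThan_telescope')
    finally show "(\<Sum>k<n. e k) \<le> r 0 - c"
      using r_bdd[of n] by simp
  qed (rule e_nonneg)
  moreover have "decseq r"
    using \<open>antimono s\<close> by (simp add: decseq_def s_r)
  then obtain l where "r \<longlonglongrightarrow> l"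
    using decseq_convergent r_bdd by blast
  then have "s \<longlonglongrightarrow> ereal l"
    unfolding s_r by (rule tendsto_ereal)
  ultimately show ?thesis
    by blast
qed

lemma tendsto_sandwich_Suc:
  fixes s t :: "nat \<Rightarrow> 'a::linorder_topology"
  assumes "s \<longlonglongrightarrow> l" and "\<And>k. s (Suc k) \<le> t k" and "\<And>k. t k \<le> s k"
  shows "t \<longlonglongrightarrow> l"
  by (rule tendsto_sandwich[OF _ _ LIMSEQ_Suc[OF assms(1)] assms(1)]) (simp_all add: assms)

lemma interlaced_sufficient_decrease:
  fixes s t :: "nat \<Rightarrow> ereal"
  assumes bdd: "\<And>k. ereal c \<le> s k" and start: "s 0 < \<infinity>"
    and t_le: "\<And>k. t k \<le> s k" and step: "\<And>k. s (Suc k) \<le> t k - ereal (e k)"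
    and e_nonneg: "\<And>k. 0 \<le> e k"
  shows "antimono s \<and> antimono t \<and> (\<exists>l::real. s \<longlonglongrightarrow> ereal l \<and> t \<longlonglongrightarrow> ereal l)
    \<and> (\<forall>k. s (Suc k) \<le> s k - ereal (e k)) \<and> (\<forall>k. t (Suc k) \<le> t k - ereal (e k))
    \<and> summable e"
proof -
  have s_decrease: "s (Suc k) \<le> s k - ereal (e k)" for k
    using step[of k] t_le[of k] by (meson ereal_minus_mono order.refl order.trans)
  have t_decrease: "t (Suc k) \<le> t k - ereal (e k)" for k
    using t_le[of "Suc k"] step[of k] by (rule order.trans)
  have s_Suc_le: "s (Suc k) \<le> t k" for k
    by (rule order.trans[OF step]) (simp add: ereal_diff_le_self e_nonneg)
  obtain l where "summable e" and s_lim: "s \<longlonglongrightarrow> ereal l"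
    using ereal_sufficient_decrease_summable_convergent[OF bdd start s_decrease e_nonneg] by blast
  moreover have "t \<longlonglongrightarrow> ereal l"
    using s_lim s_Suc_le t_le by (rule tendsto_sandwich_Suc)
  moreover have "antimono s"
    using s_decrease e_nonneg by (rule antimono_if_ereal_decrease)
  moreover have "antimono t"
    using t_decrease e_nonneg by (rule antimono_if_ereal_decrease)
  ultimately show ?thesis
    using s_decrease t_decrease by blast
qed

lemma summable_power2_norm_Pair_imp_tendsto_zero:
  fixes a :: "nat \<Rightarrow> 'a::real_normed_vector" and b :: "nat \<Rightarrow> 'b::real_normed_vector"
  assumes "summable (\<lambda>k. (norm (a k, b k))\<^sup>2)"
  shows "(\<lambda>k. norm (a k)) \<longlonglongrightarrow> 0 \<and> (\<lambda>k. norm (b k)) \<longlonglongrightarrow> 0"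
proof -
  have "(\<lambda>k. sqrt ((norm (a k, b k))\<^sup>2)) \<longlonglongrightarrow> sqrt 0"
    by (intro tendsto_real_sqrt summable_LIMSEQ_zero[OF assms])
  then have Pair_zero: "(\<lambda>k. norm (a k, b k)) \<longlonglongrightarrow> 0"
    by simp
  have "(\<lambda>k. norm (a k)) \<longlonglongrightarrow> 0"
    by (rule tendsto_sandwich[OF _ _ tendsto_const Pair_zero])
      (auto intro!: always_eventually norm_fst_le)
  moreover have "(\<lambda>k. norm (b k)) \<longlonglongrightarrow> 0"
    by (rule tendsto_sandwich[OF _ _ tendsto_const Pair_zero])
      (auto intro!: always_eventually norm_snd_le)
  ultimately show ?thesis ..
qed

theorem lemma3p1:
  fixes f :: "'a::euclidean_space \<Rightarrow> real" and gf :: "'a \<Rightarrow> 'a"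
    and g :: "'b::euclidean_space \<Rightarrow> real" and gg :: "'b \<Rightarrow> 'b"
    and Q :: "'a \<Rightarrow> 'b \<Rightarrow> ereal"
    and L :: "'a \<Rightarrow> 'b \<Rightarrow> ereal"
    and phi1 :: "'a \<Rightarrow> real" and gphi1 :: "'a \<Rightarrow> 'a"
    and phi2 :: "'b \<Rightarrow> real" and gphi2 :: "'b \<Rightarrow> 'b"
    and Lf Lg theta1 theta2 eta1 eta2 amax bmax :: real
    and alpha beta :: "nat \<Rightarrow> real"
    and x xh u :: "nat \<Rightarrow> 'a" and y yh v :: "nat \<Rightarrow> 'b"
    and xm1 :: 'a and ym1 :: 'b
  assumes L_def: "\<And>a b. L a b = ereal (f a) + Q a b + ereal (g b)"
    and L_bdd: "\<exists>c::real. \<forall>a b. ereal c \<le> L a b"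
    and f_deriv: "\<And>a. (f has_derivative (\<lambda>h. inner (gf a) h)) (at a)"
    and g_deriv: "\<And>b. (g has_derivative (\<lambda>h. inner (gg b) h)) (at b)"
    and gf_cont: "continuous_on UNIV gf" and gg_cont: "continuous_on UNIV gg"
    and gf_lip: "Lf-lipschitz_on UNIV gf" and gg_lip: "Lg-lipschitz_on UNIV gg"
    and Q_proper: "proper_fun (\<lambda>(a, b). Q a b)"
    and Q_lsc: "lsc (\<lambda>(a, b). Q a b)"
    and phi1_deriv: "\<And>a. (phi1 has_derivative (\<lambda>h. inner (gphi1 a) h)) (at a)"
    and phi2_deriv: "\<And>b. (phi2 has_derivative (\<lambda>h. inner (gphi2 b) h)) (at b)"
    and phi1_sc: "strongly_convex theta1 phi1" and phi2_sc: "strongly_convex theta2 phi2"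
    and theta1_gt: "theta1 > Lf" and theta2_gt: "theta2 > Lg"
    and gphi1_lip: "eta1-lipschitz_on UNIV gphi1" and gphi2_lip: "eta2-lipschitz_on UNIV gphi2"
    and init_dom: "L (x 0) (y 0) < \<infinity>"
    and init_hat: "xh 0 = x 0" "yh 0 = y 0"
    and amax: "amax \<ge> 0" and bmax: "bmax \<ge> 0" and ab_max: "amax + bmax < 1"
    and alpha_rng: "\<And>k. 0 \<le> alpha k \<and> alpha k \<le> amax"
    and beta_rng: "\<And>k. 0 \<le> beta k \<and> beta k \<le> bmax"
    and x_step: "\<And>k z. Q (x (Suc k)) (yh k) + ereal (inner (gf (xh k)) (x (Suc k)) + bregman phi1 gphi1 (x (Suc k)) (xh k))
                     \<le> Q z (yh k) + ereal (inner (gf (xh k)) z + bregman phi1 gphi1 z (xh k))"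
    and y_step: "\<And>k w. Q (x (Suc k)) (y (Suc k)) + ereal (inner (gg (yh k)) (y (Suc k)) + bregman phi2 gphi2 (y (Suc k)) (yh k))
                     \<le> Q (x (Suc k)) w + ereal (inner (gg (yh k)) w + bregman phi2 gphi2 w (yh k))"
    and u_def: "\<And>k. u (Suc k) = x (Suc k) + alpha k *\<^sub>R (x (Suc k) - x k)
                     + beta k *\<^sub>R (x k - (if k = 0 then xm1 else x (k - 1)))"
    and v_def: "\<And>k. v (Suc k) = y (Suc k) + alpha k *\<^sub>R (y (Suc k) - y k)
                     + beta k *\<^sub>R (y k - (if k = 0 then ym1 else y (k - 1)))"
    and hat_step: "\<And>k. (xh (Suc k), yh (Suc k)) =
                     (if L (u (Suc k)) (v (Suc k)) \<le> L (x (Suc k)) (y (Suc k))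
                      then (u (Suc k), v (Suc k)) else (x (Suc k), y (Suc k)))"
  shows "antimono (\<lambda>k. L (x k) (y k)) \<and> antimono (\<lambda>k. L (xh k) (yh k))
         \<and> (\<exists>Lstar::real. (\<lambda>k. L (x k) (y k)) \<longlonglongrightarrow> ereal Lstar
                         \<and> (\<lambda>k. L (xh k) (yh k)) \<longlonglongrightarrow> ereal Lstar)
         \<and> (\<forall>k. L (x (Suc k)) (y (Suc k)) \<le> L (x k) (y k)
                  - ereal (min ((theta1 - Lf) / 2) ((theta2 - Lg) / 2)
                           * (norm (x (Suc k) - xh k, y (Suc k) - yh k))\<^sup>2))
         \<and> (\<forall>k. L (xh (Suc k)) (yh (Suc k)) \<le> L (xh k) (yh k)
                  - ereal (min ((theta1 - Lf) / 2) ((theta2 - Lg) / 2)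
                           * (norm (x (Suc k) - xh k, y (Suc k) - yh k))\<^sup>2))
         \<and> summable (\<lambda>k. (norm (x (Suc k) - xh k, y (Suc k) - yh k))\<^sup>2)
         \<and> (\<lambda>k. norm (x (Suc k) - xh k)) \<longlonglongrightarrow> 0
         \<and> (\<lambda>k. norm (y (Suc k) - yh k)) \<longlonglongrightarrow> 0"
proof -
  \<comment> \<open>Continuity of the gradients, properness and lower semicontinuity of \<open>Q\<close>, the bounds on
    \<open>gphi1\<close>, \<open>gphi2\<close> and the extrapolation parameters only serve the existence of the
    minimisers, which \<open>x_step\<close> and \<open>y_step\<close> already provide.\<close>
  define rho where "rho = min ((theta1 - Lf) / 2) ((theta2 - Lg) / 2)"
  define N where "N k = (norm (x (Suc k) - xh k, y (Suc k) - yh k))\<^sup>2" for k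
  have rho_pos: "0 < rho"
    using theta1_gt theta2_gt by (simp add: rho_def)
  have decrement_nonneg: "0 \<le> rho * N k" for k
    using rho_pos by (simp add: N_def)
  have step: "L (x (Suc k)) (y (Suc k)) \<le> L (xh k) (yh k) - ereal (rho * N k)" for k
    unfolding L_def rho_def N_def
    by (rule alternating_bregman_step_decrease[OF f_deriv g_deriv gf_lip gg_lip
          phi1_deriv phi2_deriv phi1_sc phi2_sc x_step y_step])
  have hat_le: "L (xh k) (yh k) \<le> L (x k) (y k)" for k
    using init_hat hat_step[of "k - 1"] by (cases k) (auto split: if_splits)
  obtain c :: real where L_ge: "\<And>a b. ereal c \<le> L a b"
    using L_bdd by blast
  have L_descent: "antimono (\<lambda>k. L (x k) (y k)) \<and> antimono (\<lambda>k. L (xh k) (yh k))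
      \<and> (\<exists>Lstar::real. (\<lambda>k. L (x k) (y k)) \<longlonglongrightarrow> ereal Lstar
                       \<and> (\<lambda>k. L (xh k) (yh k)) \<longlonglongrightarrow> ereal Lstar)
      \<and> (\<forall>k. L (x (Suc k)) (y (Suc k)) \<le> L (x k) (y k) - ereal (rho * N k))
      \<and> (\<forall>k. L (xh (Suc k)) (yh (Suc k)) \<le> L (xh k) (yh k) - ereal (rho * N k))
      \<and> summable (\<lambda>k. rho * N k)"
    by (rule interlaced_sufficient_decrease[OF L_ge init_dom hat_le step decrement_nonneg])
  then have N_summable: "summable N"
    using rho_pos by simp
  obtain x_gap: "(\<lambda>k. norm (x (Suc k) - xh k)) \<longlonglongrightarrow> 0"
    and y_gap: "(\<lambda>k. norm (y (Suc k) - yh k)) \<longlonglongrightarrow> 0"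
    using summable_power2_norm_Pair_imp_tendsto_zero[OF N_summable[unfolded N_def]] by blast
  show ?thesis
    unfolding rho_def[symmetric] N_def[symmetric]
    using L_descent N_summable x_gap y_gap by blast
qed

end
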